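(* Suppose each $\mathcal A_i$ is nonempty, convex and closed, and $\kappa(0,i,\cdot)$ is concave for all $i\in S$. Then there exists an equilibrium $u^*\in\mathcal A$.
   Context: Discrete-time setting: $S=\{1,\dots,N\}$, $\bar{\mathbb N}=\{0,1,2,\dots\}$, $\mathfrak P=\{\alpha\in\mathbb R_+^N:\sum_k\alpha_k=1\}$. $\kappa:\bar{\mathbb N}\times S\times\mathfrak P\to\mathbb R$ is continuous in $\alpha$ and satisfies $\sum_{t=0}^\infty\sup_{(i,\alpha)\in S\times\mathfrak P}|\kappa(t,i,\alpha)|<\infty$. For each $i$, $\mathcal A_i\subseteq\mathfrak P$ is given, and $\mathcal A=\{u\in\mathbb R^{N\times N}: u_i\in\mathcal A_i\ \forall i\}$ ($u_i$ the $i$-th row). $X$ is a time-homogeneous discrete-time Markov chain with transition matrix $u$; $\mathbb E_{i,u}$ the expectation given $X_0=i$. $V(i,u)=\mathbb E_{i,u}[\sum_{t=0}^\infty\kappa(t,X_t,u_{X_t})]$. $u\otimes_1u^*$: use $u$ at time $0$ and $u^*$ at all later times, so $V(i,u\otimes_1u^* )=\kappa(0,i,u_i)+\sum_j u_{ij}\mathbb E_{j,u^*}[\sum_{t=0}^\infty\kappa(t+1,X_t,u^*_{X_t})]$. $u^*\in\mathcal A$ is an equilibrium if $V(i,u^* )\ge V(i,u\otimes_1u^* )$ for all $(i,u)\in S\times\mathcal A$. *)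

theory Defs
  imports "HOL-Analysis.Analysis"
begin

text \<open>States S = {1..N} are modelled by an arbitrary finite type 'n; probability
  vectors are elements of real^'n, transition matrices are real^'n^'n (row i = u$i).\<close>

definition prob_simplex :: "(real^'n::finite) set" where
  "prob_simplex = {\<alpha>. (\<forall>k. 0 \<le> \<alpha>$k) \<and> (\<Sum>k\<in>UNIV. \<alpha>$k) = 1}"

definition admissible :: "('n::finite \<Rightarrow> (real^'n) set) \<Rightarrow> (real^'n^'n) set" where
  "admissible A = {u. \<forall>i. u$i \<in> A i}"

fun matpow :: "real^'n^'n \<Rightarrow> nat \<Rightarrow> real^'n^'n" where
  "matpow u 0 = mat 1"
| "matpow u (Suc t) = matpow u t ** u"

text \<open>V(i,u) = E_{i,u}[sum_t kappa(t,X_t,u_{X_t})]; since P(X_t = j | X_0 = i) = (u^t)_{ij},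
  this is sum_t sum_j (u^t)_{ij} kappa(t,j,u_j).\<close>
definition Vval :: "(nat \<Rightarrow> 'n::finite \<Rightarrow> real^'n \<Rightarrow> real) \<Rightarrow> 'n \<Rightarrow> real^'n^'n \<Rightarrow> real" where
  "Vval \<kappa> i u = (\<Sum>t. \<Sum>j\<in>UNIV. (matpow u t)$i$j * \<kappa> t j (u$j))"

definition Vdev :: "(nat \<Rightarrow> 'n::finite \<Rightarrow> real^'n \<Rightarrow> real) \<Rightarrow> 'n \<Rightarrow> real^'n^'n \<Rightarrow> real^'n^'n \<Rightarrow> real" where
  "Vdev \<kappa> i u us = \<kappa> 0 i (u$i) +
     (\<Sum>j\<in>UNIV. u$i$j * (\<Sum>t. \<Sum>k\<in>UNIV. (matpow us t)$j$k * \<kappa> (Suc t) k (us$k)))"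

definition equilibrium :: "(nat \<Rightarrow> 'n::finite \<Rightarrow> real^'n \<Rightarrow> real) \<Rightarrow> ('n \<Rightarrow> (real^'n) set) \<Rightarrow> real^'n^'n \<Rightarrow> bool" where
  "equilibrium \<kappa> A us \<longleftrightarrow> us \<in> admissible A \<and>
     (\<forall>i. \<forall>u\<in>admissible A. Vval \<kappa> i us \<ge> Vdev \<kappa> i u us)"

end

(*
  Let W(u)_j be the value of following u from state j, with rewards shifted by one period.
  Because the rows of u^t are probability vectors and the rewards are summably bounded,
  W is a uniform limit of continuous functions of u, hence continuous.  Unrolling one step,
  us is an equilibrium iff each row us_i maximises the concave payoff
  kappa(0,i,a) + a . W(us) over A_i.  The proximal best response, maximising this payoff minus
  |a - u_i|^2, is single-valued by strong concavity and continuous by the closed graph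
  theorem, so Brouwer's theorem gives a fixed point; at a fixed point the quadratic penalty
  can be dropped since the payoff is concave.
*)
theory Submission
  imports Defs
begin

lemma closed_prob_simplex: "closed (prob_simplex :: (real^'n::finite) set)"
proof -
  have "prob_simplex = {\<alpha>::real^'n. \<forall>k. 0 \<le> \<alpha>$k} \<inter> {\<alpha>. (\<Sum>k\<in>UNIV. \<alpha>$k) = 1}"
    by (auto simp: prob_simplex_def)
  moreover have "closed {\<alpha>::real^'n. (\<Sum>k\<in>UNIV. \<alpha>$k) = 1}"
    by (intro closed_Collect_eq continuous_intros)
  ultimately show ?thesis
    using closed_positive_orthant by (metis closed_Int)
qed

lemma bounded_prob_simplex: "bounded (prob_simplex :: (real^'n::finite) set)"
proof -
  have "norm \<alpha> \<le> 1" if "\<alpha> \<in> prob_simplex" for \<alpha> :: "real^'n"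
  proof -
    have "norm \<alpha> \<le> (\<Sum>k\<in>UNIV. \<bar>\<alpha>$k\<bar>)" by (rule norm_le_l1_cart)
    also have "\<dots> = 1" using that by (simp add: prob_simplex_def)
    finally show ?thesis .
  qed
  then show ?thesis unfolding bounded_iff by blast
qed

lemma compact_prob_simplex: "compact (prob_simplex :: (real^'n::finite) set)"
  using closed_prob_simplex bounded_prob_simplex compact_eq_bounded_closed by blast

lemma abs_reward_le_Sup:
  fixes \<kappa> :: "nat \<Rightarrow> 'n::finite \<Rightarrow> real^'n \<Rightarrow> real"
  assumes cont: "\<And>i. continuous_on prob_simplex (\<kappa> t i)" and \<alpha>: "\<alpha> \<in> prob_simplex"
  shows "\<bar>\<kappa> t i \<alpha>\<bar> \<le> Sup {\<bar>\<kappa> t i \<alpha>\<bar> | i \<alpha>. \<alpha> \<in> prob_simplex}"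
proof -
  have image: "{\<bar>\<kappa> t i \<alpha>\<bar> | i \<alpha>. \<alpha> \<in> prob_simplex} = (\<Union>i. (\<lambda>\<alpha>. \<bar>\<kappa> t i \<alpha>\<bar>) ` prob_simplex)"
    by auto
  have "compact (\<Union>i. (\<lambda>\<alpha>. \<bar>\<kappa> t i \<alpha>\<bar>) ` prob_simplex)"
    by (intro compact_UN finite compact_continuous_image compact_prob_simplex continuous_intros cont)
  then have "bdd_above {\<bar>\<kappa> t i \<alpha>\<bar> | i \<alpha>. \<alpha> \<in> prob_simplex}"
    unfolding image by (intro bounded_imp_bdd_above compact_imp_bounded)
  then show ?thesis using \<alpha> by (intro cSup_upper) auto
qed

lemma prob_simplex_mixture:
  assumes "p \<in> prob_simplex" and "\<And>k. q k \<in> prob_simplex"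
  shows "(\<chi> j. \<Sum>k\<in>UNIV. p$k * q k $ j) \<in> prob_simplex"
  using assms unfolding prob_simplex_def
  by (auto simp: sum.swap[of _ UNIV UNIV] sum_distrib_left[symmetric] intro!: sum_nonneg)

lemma abs_expectation_le:
  assumes p: "p \<in> prob_simplex" and g: "\<And>k. \<bar>g k\<bar> \<le> B"
  shows "\<bar>\<Sum>k\<in>UNIV. p$k * g k\<bar> \<le> B"
proof -
  have "\<bar>\<Sum>k\<in>UNIV. p$k * g k\<bar> \<le> (\<Sum>k\<in>UNIV. \<bar>p$k * g k\<bar>)" by (rule sum_abs)
  also have "\<dots> \<le> (\<Sum>k\<in>UNIV. p$k * B)"
    using p g by (intro sum_mono) (auto simp: prob_simplex_def abs_mult intro: mult_left_mono)
  also have "\<dots> = B" using p by (simp add: prob_simplex_def sum_distrib_right[symmetric])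
  finally show ?thesis .
qed

lemma admissible_mono: "(\<And>i. A i \<subseteq> B i) \<Longrightarrow> admissible A \<subseteq> admissible B"
  by (auto simp: admissible_def)

lemma closed_admissible:
  fixes A :: "'n::finite \<Rightarrow> (real^'n) set"
  assumes "\<And>i. closed (A i)"
  shows "closed (admissible A)"
proof -
  have "admissible A = (\<Inter>i. (\<lambda>u. u$i) -` A i)" by (auto simp: admissible_def)
  moreover have "closed ((\<lambda>u::real^'n^'n. u$i) -` A i)" for i
    by (intro closed_vimage assms continuous_intros)
  ultimately show ?thesis by auto
qed

lemma bounded_admissible:
  fixes A :: "'n::finite \<Rightarrow> (real^'n) set"
  assumes "\<And>i. bounded (A i)"
  shows "bounded (admissible A)"
proof -
  obtain B where B: "\<And>i x. x \<in> A i \<Longrightarrow> norm x \<le> B i"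
    using assms unfolding bounded_iff by metis
  have "norm u \<le> (\<Sum>i\<in>UNIV. B i)" if "u \<in> admissible A" for u
  proof -
    have "norm u \<le> (\<Sum>i\<in>UNIV. norm (u$i))"
      unfolding norm_vec_def by (rule L2_set_le_sum) auto
    also have "\<dots> \<le> (\<Sum>i\<in>UNIV. B i)"
      using that B by (intro sum_mono) (auto simp: admissible_def)
    finally show ?thesis .
  qed
  then show ?thesis unfolding bounded_iff by blast
qed

lemma compact_admissible:
  fixes A :: "'n::finite \<Rightarrow> (real^'n) set"
  assumes "\<And>i. compact (A i)"
  shows "compact (admissible A)"
  using assms closed_admissible bounded_admissible compact_eq_bounded_closed by metis

lemma convex_admissible: "(\<And>i. convex (A i)) \<Longrightarrow> convex (admissible A)"
  unfolding convex_def admissible_def by auto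

lemma admissible_nonempty: "(\<And>i. A i \<noteq> {}) \<Longrightarrow> admissible A \<noteq> {}"
proof -
  assume "\<And>i. A i \<noteq> {}"
  then have "(\<chi> i. SOME a. a \<in> A i) \<in> admissible A"
    by (auto simp: admissible_def intro: some_in_eq[THEN iffD2])
  then show ?thesis by blast
qed

definition stochastic :: "(real^'n::finite^'n) set" where
  "stochastic = admissible (\<lambda>_. prob_simplex)"

lemma stochastic_row: "u \<in> stochastic \<Longrightarrow> u$i \<in> prob_simplex"
  by (simp add: stochastic_def admissible_def)

lemma matpow_Suc_left: "matpow u (Suc t) = u ** matpow u t"
proof (induction t)
  case 0
  then show ?case by simp
next
  case (Suc t)
  have "matpow u (Suc (Suc t)) = (u ** matpow u t) ** u" using Suc by simp
  also have "\<dots> = u ** matpow u (Suc t)" by (simp add: matrix_mul_assoc)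
  finally show ?case .
qed

lemma matpow_stochastic:
  assumes "u \<in> stochastic"
  shows "matpow u t \<in> stochastic"
proof (induction t)
  case 0
  then show ?case by (auto simp: stochastic_def admissible_def prob_simplex_def mat_def)
next
  case (Suc t)
  have "matpow u (Suc t) $ j \<in> prob_simplex" for j
  proof -
    have "matpow u (Suc t) $ j = (\<chi> m. \<Sum>k\<in>UNIV. u$j$k * matpow u t $ k $ m)"
      by (simp add: matpow_Suc_left matrix_matrix_mult_def del: matpow.simps)
    then show ?thesis
      using prob_simplex_mixture[OF stochastic_row[OF assms] stochastic_row[OF Suc]] by simp
  qed
  then show ?case by (simp add: stochastic_def admissible_def)
qed

lemma continuous_on_matpow_entry: "continuous_on S (\<lambda>u. matpow u t $ j $ k)"
proof (induction t arbitrary: j k)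
  case 0
  then show ?case by simp
next
  case (Suc t)
  show ?case
    by (simp add: matrix_matrix_mult_def) (intro continuous_intros Suc)
qed

definition continuation_value ::
    "(nat \<Rightarrow> 'n::finite \<Rightarrow> real^'n \<Rightarrow> real) \<Rightarrow> real^'n^'n \<Rightarrow> 'n \<Rightarrow> real" where
  "continuation_value \<kappa> u j = (\<Sum>t. \<Sum>k\<in>UNIV. matpow u t $ j $ k * \<kappa> (Suc t) k (u$k))"

lemma abs_expected_reward_le:
  assumes bound: "\<And>t i \<alpha>. \<alpha> \<in> prob_simplex \<Longrightarrow> \<bar>\<kappa> t i \<alpha>\<bar> \<le> M t"
    and u: "u \<in> stochastic"
  shows "\<bar>\<Sum>k\<in>UNIV. matpow u t $ j $ k * \<kappa> s k (u$k)\<bar> \<le> M s"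
  using abs_expectation_le[OF stochastic_row[OF matpow_stochastic[OF u]] bound[OF stochastic_row[OF u]]] .

lemma continuous_on_continuation_value:
  assumes cont: "\<And>t i. continuous_on prob_simplex (\<kappa> t i)"
    and bound: "\<And>t i \<alpha>. \<alpha> \<in> prob_simplex \<Longrightarrow> \<bar>\<kappa> t i \<alpha>\<bar> \<le> M t"
    and summable: "summable M"
  shows "continuous_on stochastic (\<lambda>u. continuation_value \<kappa> u j)"
proof -
  have "uniform_limit stochastic
      (\<lambda>n u. \<Sum>t<n. \<Sum>k\<in>UNIV. matpow u t $ j $ k * \<kappa> (Suc t) k (u$k))
      (\<lambda>u. continuation_value \<kappa> u j) sequentially"
    unfolding continuation_value_def
    using summable summable_Suc_iff
    by (intro Weierstrass_m_test[where M = "\<lambda>t. M (Suc t)"]) (auto intro!: abs_expected_reward_le[OF bound])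
  moreover have "continuous_on stochastic (\<lambda>u. \<kappa> t k (u$k))" for t k
    by (rule continuous_on_compose2[OF cont]) (auto intro: continuous_intros simp: stochastic_row)
  then have "continuous_on stochastic (\<lambda>u. \<Sum>t<n. \<Sum>k\<in>UNIV. matpow u t $ j $ k * \<kappa> (Suc t) k (u$k))" for n
    by (intro continuous_intros continuous_on_matpow_entry)
  ultimately show ?thesis
    by (intro uniform_limit_theorem[OF always_eventually]) auto
qed

definition one_step_payoff ::
    "(nat \<Rightarrow> 'n::finite \<Rightarrow> real^'n \<Rightarrow> real) \<Rightarrow> real^'n^'n \<Rightarrow> 'n \<Rightarrow> real^'n \<Rightarrow> real" where
  "one_step_payoff \<kappa> u i \<alpha> = \<kappa> 0 i \<alpha> + (\<Sum>j\<in>UNIV. \<alpha>$j * continuation_value \<kappa> u j)"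

lemma Vdev_eq_one_step_payoff: "Vdev \<kappa> i u us = one_step_payoff \<kappa> us i (u$i)"
  by (simp add: Vdev_def one_step_payoff_def continuation_value_def)

lemma Vval_eq_one_step:
  assumes bound: "\<And>t i \<alpha>. \<alpha> \<in> prob_simplex \<Longrightarrow> \<bar>\<kappa> t i \<alpha>\<bar> \<le> M t"
    and summable: "summable M" and u: "u \<in> stochastic"
  shows "Vval \<kappa> i u = one_step_payoff \<kappa> u i (u$i)"
proof -
  define r where "r t j = (\<Sum>k\<in>UNIV. matpow u t $ j $ k * \<kappa> t k (u$k))" for t j
  define r' where "r' t j = (\<Sum>k\<in>UNIV. matpow u t $ j $ k * \<kappa> (Suc t) k (u$k))" for t j
  have summable_r: "summable (\<lambda>t. r t i)"
  proof (rule summable_comparison_test'[OF summable])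
    show "norm (r t i) \<le> M t" for t
      unfolding r_def real_norm_def by (rule abs_expected_reward_le[OF bound u])
  qed
  have summable_r': "summable (\<lambda>t. r' t j)" for j
  proof (rule summable_comparison_test')
    show "summable (\<lambda>t. M (Suc t))"
      using summable by (simp add: summable_Suc_iff)
    show "norm (r' t j) \<le> M (Suc t)" for t
      unfolding r'_def real_norm_def by (rule abs_expected_reward_le[OF bound u])
  qed
  have r_0: "r 0 i = \<kappa> 0 i (u$i)"
    by (simp add: r_def mat_def if_distrib[where f="\<lambda>x. x * c" for c] cong: if_cong)
  have r_Suc: "r (Suc t) i = (\<Sum>j\<in>UNIV. u$i$j * r' t j)" for t
    by (simp add: r_def r'_def matpow_Suc_left matrix_matrix_mult_def sum_distrib_left
        sum_distrib_right mult.assoc del: matpow.simps) (rule sum.swap)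
  have "Vval \<kappa> i u = r 0 i + (\<Sum>t. r (Suc t) i)"
    using suminf_split_head[OF summable_r] by (simp add: Vval_def r_def)
  also have "(\<Sum>t. r (Suc t) i) = (\<Sum>j\<in>UNIV. \<Sum>t. u$i$j * r' t j)"
    unfolding r_Suc by (rule suminf_sum) (intro summable_mult summable_r')
  also have "\<dots> = (\<Sum>j\<in>UNIV. u$i$j * continuation_value \<kappa> u j)"
    by (intro sum.cong refl) (simp only: suminf_mult[OF summable_r'], simp add: r'_def continuation_value_def)
  finally show ?thesis by (simp add: r_0 one_step_payoff_def)
qed

lemma continuous_on_one_step_payoff:
  assumes cont: "\<And>t i. continuous_on prob_simplex (\<kappa> t i)"
    and bound: "\<And>t i \<alpha>. \<alpha> \<in> prob_simplex \<Longrightarrow> \<bar>\<kappa> t i \<alpha>\<bar> \<le> M t"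
    and summable: "summable M"
  shows "continuous_on (stochastic \<times> prob_simplex) (\<lambda>(u, \<alpha>). one_step_payoff \<kappa> u i \<alpha>)"
proof -
  have "continuous_on (stochastic \<times> prob_simplex) (\<lambda>p. \<kappa> 0 i (snd p))"
    by (intro continuous_on_compose2[OF cont continuous_on_snd]) auto
  moreover have "continuous_on (stochastic \<times> prob_simplex) (\<lambda>p. continuation_value \<kappa> (fst p) j)" for j
    by (intro continuous_on_compose2[OF continuous_on_continuation_value[OF cont bound summable]
        continuous_on_fst]) auto
  ultimately show ?thesis
    unfolding one_step_payoff_def case_prod_beta by (intro continuous_intros)
qed

lemma concave_on_one_step_payoff:
  assumes "concave_on C (\<kappa> 0 i)"
  shows "concave_on C (one_step_payoff \<kappa> u i)"
proof -
  have "concave_on C (\<lambda>\<alpha>. \<Sum>j\<in>UNIV. \<alpha>$j * continuation_value \<kappa> u j)"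
    using concave_on_imp_convex[OF assms]
    by (simp add: concave_on_iff distrib_right sum.distrib sum_distrib_left mult.assoc)
  with assms show ?thesis
    unfolding one_step_payoff_def by (rule concave_on_add)
qed

lemma strongly_concave_minus_norm_sq:
  fixes g :: "'a::real_inner \<Rightarrow> real"
  assumes "concave_on C g" and "a \<in> C" and "b \<in> C" and "0 \<le> s" and "s \<le> 1"
  shows "(1 - s) * (g a - (norm (a - c))\<^sup>2) + s * (g b - (norm (b - c))\<^sup>2) + s * (1 - s) * (norm (a - b))\<^sup>2
         \<le> g ((1 - s) *\<^sub>R a + s *\<^sub>R b) - (norm ((1 - s) *\<^sub>R a + s *\<^sub>R b - c))\<^sup>2"
proof -
  have "(1 - s) * g a + s * g b \<le> g ((1 - s) *\<^sub>R a + s *\<^sub>R b)"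
    using assms by (intro concave_onD) auto
  moreover have "(norm ((1 - s) *\<^sub>R a + s *\<^sub>R b - c))\<^sup>2
      = (1 - s) * (norm (a - c))\<^sup>2 + s * (norm (b - c))\<^sup>2 - s * (1 - s) * (norm (a - b))\<^sup>2"
    by (simp add: power2_norm_eq_inner inner_simps algebra_simps inner_commute)
  ultimately show ?thesis by (simp add: algebra_simps)
qed

lemma unique_argmax_concave_minus_norm_sq:
  fixes g :: "'a::real_inner \<Rightarrow> real" and c :: 'a
  defines "h \<equiv> \<lambda>x. g x - (norm (x - c))\<^sup>2"
  assumes concave: "concave_on C g" and "a \<in> C" and "b \<in> C"
    and a_max: "\<forall>x\<in>C. h x \<le> h a" and b_max: "\<forall>x\<in>C. h x \<le> h b"
  shows "a = b"
proof (rule ccontr)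
  assume "a \<noteq> b"
  define m where "m = (1 - 1/2) *\<^sub>R a + (1/2) *\<^sub>R b"
  have "m \<in> C"
    using \<open>a \<in> C\<close> \<open>b \<in> C\<close> concave_on_imp_convex[OF concave] by (auto simp: m_def intro: convexD)
  have "h a = h b" using a_max b_max \<open>a \<in> C\<close> \<open>b \<in> C\<close> by (meson order_antisym)
  moreover have "(1 - 1/2) * h a + 1/2 * h b + 1/2 * (1 - 1/2) * (norm (a - b))\<^sup>2 \<le> h m"
    unfolding h_def m_def using assms by (intro strongly_concave_minus_norm_sq) auto
  ultimately have "h a + (norm (a - b))\<^sup>2 / 4 \<le> h m" by (simp add: algebra_simps)
  moreover have "(norm (a - b))\<^sup>2 > 0" using \<open>a \<noteq> b\<close> by simp
  ultimately have "h a < h m" by linarith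
  with a_max \<open>m \<in> C\<close> show False by (meson not_le)
qed

(* A step of length s from a towards b gains s * (g b - g a) but costs only s^2 |a - b|^2. *)
lemma argmax_concave_if_proximal_argmax:
  fixes g :: "'a::real_inner \<Rightarrow> real"
  assumes concave: "concave_on C g" and a: "a \<in> C"
    and prox_max: "\<forall>x\<in>C. g x - (norm (x - a))\<^sup>2 \<le> g a"
    and b: "b \<in> C"
  shows "g b \<le> g a"
proof (rule ccontr)
  assume "\<not> g b \<le> g a"
  define \<delta> where "\<delta> = g b - g a"
  define D where "D = (norm (a - b))\<^sup>2"
  define s where "s = min 1 (\<delta> / (2 * D))"
  have "\<delta> > 0" using \<open>\<not> g b \<le> g a\<close> by (simp add: \<delta>_def)
  then have "a \<noteq> b" by (auto simp: \<delta>_def)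
  then have "D > 0" by (simp add: D_def)
  have "s > 0" and "s \<le> 1" and "s * D \<le> \<delta> / 2"
    using \<open>\<delta> > 0\<close> \<open>D > 0\<close> by (auto simp: s_def min_def field_simps)
  define x where "x = (1 - s) *\<^sub>R a + s *\<^sub>R b"
  have "x \<in> C"
    using a b \<open>s > 0\<close> \<open>s \<le> 1\<close> concave_on_imp_convex[OF concave] by (auto simp: x_def intro: convexD)
  have "(1 - s) * g a + s * (g b - D) + s * (1 - s) * D \<le> g x - (norm (x - a))\<^sup>2"
    using strongly_concave_minus_norm_sq[OF concave a b, of s a] \<open>s > 0\<close> \<open>s \<le> 1\<close>
    by (simp add: x_def D_def norm_minus_commute)
  also have "\<dots> \<le> g a" using prox_max \<open>x \<in> C\<close> by blast
  finally have "s * \<delta> \<le> s * (s * D)" by (simp add: \<delta>_def algebra_simps)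
  moreover have "s * (s * D) \<le> s * (\<delta> / 2)"
    using \<open>s * D \<le> \<delta> / 2\<close> \<open>s > 0\<close> by (intro mult_left_mono) auto
  ultimately show False using \<open>s > 0\<close> \<open>\<delta> > 0\<close> by (simp add: field_simps)
qed

lemma continuous_on_unique_argmax:
  fixes \<phi> :: "'a::euclidean_space \<Rightarrow> 'b::euclidean_space \<Rightarrow> real"
  assumes S: "closed S" and K: "compact K"
    and cont: "continuous_on (S \<times> K) (\<lambda>(u, x). \<phi> u x)"
    and f: "\<And>u. u \<in> S \<Longrightarrow> f u \<in> K \<and> (\<forall>x\<in>K. \<phi> u x \<le> \<phi> u (f u))"
    and unique: "\<And>u a. u \<in> S \<Longrightarrow> a \<in> K \<Longrightarrow> \<forall>x\<in>K. \<phi> u x \<le> \<phi> u a \<Longrightarrow> a = f u"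
  shows "continuous_on S f"
proof (rule continuous_from_closed_graph[OF K])
  show "f \<in> S \<rightarrow> K" using f by blast
  define gap where "gap x = (\<lambda>(u, a). \<phi> u a - \<phi> u x)" for x
  have "continuous_on (S \<times> K) (\<lambda>p. \<phi> (fst p) x)" if "x \<in> K" for x
    using that by (intro continuous_on_compose2[OF cont, where f = "\<lambda>p. (fst p, x)", simplified])
      (auto intro!: continuous_intros)
  then have "continuous_on (S \<times> K) (gap x)" if "x \<in> K" for x
    using that cont unfolding gap_def by (auto simp: case_prod_beta intro: continuous_intros)
  moreover have "closed (S \<times> K)" using S K by (simp add: closed_Times compact_imp_closed)
  ultimately have "closed ((S \<times> K) \<inter> gap x -` {0..})" if "x \<in> K" for x
    using that by (intro continuous_closed_preimage) auto
  then have "closed ((S \<times> K) \<inter> (\<Inter>x\<in>K. (S \<times> K) \<inter> gap x -` {0..}))"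
    using \<open>closed (S \<times> K)\<close> by (intro closed_Int[OF _ closed_INT]) auto
  moreover have "(\<lambda>u. (u, f u)) ` S = (S \<times> K) \<inter> (\<Inter>x\<in>K. (S \<times> K) \<inter> gap x -` {0..})"
  proof (intro equalityI subsetI)
    fix p assume "p \<in> (\<lambda>u. (u, f u)) ` S"
    then show "p \<in> (S \<times> K) \<inter> (\<Inter>x\<in>K. (S \<times> K) \<inter> gap x -` {0..})"
      using f by (auto simp: gap_def)
  next
    fix p assume p: "p \<in> (S \<times> K) \<inter> (\<Inter>x\<in>K. (S \<times> K) \<inter> gap x -` {0..})"
    obtain u a where p_eq: "p = (u, a)" by fastforce
    have "p \<in> gap x -` {0..}" if "x \<in> K" for x using p that by blast
    then have "\<forall>x\<in>K. \<phi> u x \<le> \<phi> u a" by (simp add: gap_def p_eq)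
    moreover have "u \<in> S" "a \<in> K" using p p_eq by auto
    ultimately have "p = (u, f u)" using unique p_eq by blast
    then show "p \<in> (\<lambda>u. (u, f u)) ` S" using \<open>u \<in> S\<close> by blast
  qed
  ultimately show "closed ((\<lambda>u. (u, f u)) ` S)" by simp
qed

lemma exists_continuous_proximal_response:
  fixes \<pi> :: "real^'n^'n \<Rightarrow> 'n::finite \<Rightarrow> real^'n \<Rightarrow> real"
  defines "\<phi> \<equiv> \<lambda>i u \<alpha>. \<pi> u i \<alpha> - (norm (\<alpha> - u$i))\<^sup>2"
  assumes compact: "\<And>i. compact (A i)" and ne: "\<And>i. A i \<noteq> {}"
    and cont: "\<And>i. continuous_on (admissible A \<times> A i) (\<lambda>(u, \<alpha>). \<pi> u i \<alpha>)"
    and concave: "\<And>u i. u \<in> admissible A \<Longrightarrow> concave_on (A i) (\<pi> u i)"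
  obtains T where "continuous_on (admissible A) T" and "T \<in> admissible A \<rightarrow> admissible A"
    and "\<And>u i x. u \<in> admissible A \<Longrightarrow> x \<in> A i \<Longrightarrow> \<phi> i u x \<le> \<phi> i u (T u $ i)"
proof -
  define S where "S = admissible A"
  have "(\<lambda>(u, \<alpha>). \<phi> i u \<alpha>) = (\<lambda>p. (\<lambda>(u, \<alpha>). \<pi> u i \<alpha>) p - (norm (snd p - fst p $ i))\<^sup>2)" for i
    by (auto simp: \<phi>_def)
  then have \<phi>_cont: "continuous_on (S \<times> A i) (\<lambda>(u, \<alpha>). \<phi> i u \<alpha>)" for i
    unfolding S_def using cont by (auto intro!: continuous_intros)
  have \<phi>_argmax: "\<exists>a\<in>A i. \<forall>x\<in>A i. \<phi> i u x \<le> \<phi> i u a" if "u \<in> S" for u i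
  proof (rule continuous_attains_sup[OF compact ne])
    show "continuous_on (A i) (\<phi> i u)"
      using that by (intro continuous_on_compose2[OF \<phi>_cont, where f = "\<lambda>\<alpha>. (u, \<alpha>)", simplified])
        (auto intro!: continuous_intros)
  qed
  define T where "T u = (\<chi> i. SOME a. a \<in> A i \<and> (\<forall>x\<in>A i. \<phi> i u x \<le> \<phi> i u a))" for u
  have T: "T u $ i \<in> A i \<and> (\<forall>x\<in>A i. \<phi> i u x \<le> \<phi> i u (T u $ i))" if "u \<in> S" for u i
    unfolding T_def using someI_ex[OF \<phi>_argmax[OF that, of i, unfolded Bex_def]] by simp
  have "continuous_on S (\<lambda>u. T u $ i)" for i
  proof (rule continuous_on_unique_argmax[OF _ compact \<phi>_cont])
    show "closed S"
      unfolding S_def using compact by (intro closed_admissible compact_imp_closed)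
    show "\<And>u. u \<in> S \<Longrightarrow> T u $ i \<in> A i \<and> (\<forall>x\<in>A i. \<phi> i u x \<le> \<phi> i u (T u $ i))"
      by (rule T)
    show "a = T u $ i" if "u \<in> S" "a \<in> A i" "\<forall>x\<in>A i. \<phi> i u x \<le> \<phi> i u a" for u a
      using unique_argmax_concave_minus_norm_sq[OF concave] T that
      unfolding \<phi>_def S_def by blast
  qed
  then have "continuous_on S T"
    using continuous_on_vec_lambda[of S "\<lambda>i u. T u $ i"] by (simp add: vec_lambda_eta)
  moreover have "T \<in> S \<rightarrow> S" using T by (auto simp: S_def admissible_def)
  ultimately show ?thesis using that T unfolding S_def by blast
qed

lemma exists_concave_game_equilibrium:
  fixes \<pi> :: "real^'n^'n \<Rightarrow> 'n::finite \<Rightarrow> real^'n \<Rightarrow> real"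
  assumes compact: "\<And>i. compact (A i)" and convex: "\<And>i. convex (A i)" and ne: "\<And>i. A i \<noteq> {}"
    and cont: "\<And>i. continuous_on (admissible A \<times> A i) (\<lambda>(u, \<alpha>). \<pi> u i \<alpha>)"
    and concave: "\<And>u i. u \<in> admissible A \<Longrightarrow> concave_on (A i) (\<pi> u i)"
  obtains us where "us \<in> admissible A" and "\<And>i \<beta>. \<beta> \<in> A i \<Longrightarrow> \<pi> us i \<beta> \<le> \<pi> us i (us$i)"
proof -
  obtain T where T_cont: "continuous_on (admissible A) T"
    and T_maps: "T \<in> admissible A \<rightarrow> admissible A"
    and T_max: "\<And>u i x. u \<in> admissible A \<Longrightarrow> x \<in> A i \<Longrightarrow>
      \<pi> u i x - (norm (x - u$i))\<^sup>2 \<le> \<pi> u i (T u $ i) - (norm (T u $ i - u$i))\<^sup>2"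
    using exists_continuous_proximal_response[OF compact ne cont concave] by blast
  obtain us where us: "us \<in> admissible A" "T us = us"
    using brouwer[OF compact_admissible convex_admissible admissible_nonempty T_cont T_maps]
      compact convex ne by metis
  have "\<pi> us i \<beta> \<le> \<pi> us i (us$i)" if "\<beta> \<in> A i" for i \<beta>
  proof (rule argmax_concave_if_proximal_argmax[OF concave[OF us(1)]])
    show "us $ i \<in> A i" using us(1) by (simp add: admissible_def)
    show "\<forall>x\<in>A i. \<pi> us i x - (norm (x - us $ i))\<^sup>2 \<le> \<pi> us i (us $ i)"
      using T_max[OF us(1)] by (simp add: us(2))
    show "\<beta> \<in> A i" by (rule that)
  qed
  with us that show ?thesis by blast
qed

theorem mainTheorem10:
  fixes \<kappa> :: "nat \<Rightarrow> 'n::finite \<Rightarrow> real^'n \<Rightarrow> real"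
    and A :: "'n \<Rightarrow> (real^'n) set"
  assumes cont: "\<And>t i. continuous_on prob_simplex (\<kappa> t i)"
    and summ: "summable (\<lambda>t. Sup {\<bar>\<kappa> t i \<alpha>\<bar> | i \<alpha>. \<alpha> \<in> prob_simplex})"
    and sub: "\<And>i. A i \<subseteq> prob_simplex"
    and ne: "\<And>i. A i \<noteq> {}"
    and cvx: "\<And>i. convex (A i)"
    and cl: "\<And>i. closed (A i)"
    and conc: "\<And>i. concave_on prob_simplex (\<kappa> 0 i)"
  shows "\<exists>us. equilibrium \<kappa> A us"
proof -
  define M where "M t = Sup {\<bar>\<kappa> t i \<alpha>\<bar> | i \<alpha>. \<alpha> \<in> prob_simplex}" for t
  have bound: "\<bar>\<kappa> t i \<alpha>\<bar> \<le> M t" if "\<alpha> \<in> prob_simplex" for t i \<alpha>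
    unfolding M_def using abs_reward_le_Sup[OF cont that] .
  have summable: "summable M" using summ unfolding M_def .
  have stochastic: "admissible A \<subseteq> stochastic"
    unfolding stochastic_def using sub by (rule admissible_mono)
  have compact: "compact (A i)" for i
    using compact_eq_bounded_closed bounded_subset[OF bounded_prob_simplex sub] cl by blast
  have payoff_cont: "continuous_on (admissible A \<times> A i) (\<lambda>(u, \<alpha>). one_step_payoff \<kappa> u i \<alpha>)" for i
    using stochastic sub
    by (intro continuous_on_subset[OF continuous_on_one_step_payoff[OF cont bound summable]]
        Sigma_mono) auto
  have payoff_concave: "concave_on (A i) (one_step_payoff \<kappa> u i)" for u i
  proof (rule concave_on_one_step_payoff)
    show "concave_on (A i) (\<kappa> 0 i)"
      using conc[of i] sub[of i] cvx[of i] unfolding concave_on_def by (rule convex_on_subset)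
  qed
  obtain us where us: "us \<in> admissible A"
    and best_response: "\<And>i \<beta>. \<beta> \<in> A i \<Longrightarrow> one_step_payoff \<kappa> us i \<beta> \<le> one_step_payoff \<kappa> us i (us$i)"
    using exists_concave_game_equilibrium[OF compact cvx ne payoff_cont payoff_concave] by blast
  have "Vdev \<kappa> i u us \<le> Vval \<kappa> i us" if "u \<in> admissible A" for i u
    using that us stochastic best_response
    by (auto simp: Vdev_eq_one_step_payoff Vval_eq_one_step[OF bound summable] admissible_def)
  with us show ?thesis unfolding equilibrium_def by blast
qed

end
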